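(* Let $(\mathcal X,d)$ be a metric space with $d(x,y)\le1$ for all $x,y\in\mathcal X$, let $f:[n]\to\mathcal X$ be a feature, $1\le k\le n$, and $\mu=\mathbb E_{S\sim\mathcal U_{k,n}}[W(\phi_f^{[n]},\phi_f^S)]$. Then for every $t>0$, $$\mathbb P_{S\sim\mathcal U_{k,n}}\big[W(\phi_f^{[n]},\phi_f^S)\ge\mu+t\big]\le\exp(-t^2k/4).$$
   Context: For nonempty $S\subseteq[n]$, $\phi_f^S=\frac1{|S|}\sum_{i\in S}\delta(f(i))$, with $\delta(\cdot)$ a Dirac mass. $W(\phi,\psi)=\min_{\gamma}\mathbb E_{(x,y)\sim\gamma}[d(x,y)]$ over couplings $\gamma$ of the finitely supported distributions $\phi,\psi$ (Wasserstein-1 distance). $\mathcal U_{k,n}$ is the uniform distribution over size-$k$ subsets of $[n]$. *)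

theory Defs
  imports "HOL-Probability.Probability"
begin

definition empirical :: "(nat \<Rightarrow> 'a) \<Rightarrow> nat set \<Rightarrow> 'a pmf" where
  "empirical f S = map_pmf f (pmf_of_set S)"

definition couplings :: "'a pmf \<Rightarrow> 'b pmf \<Rightarrow> ('a \<times> 'b) pmf set" where
  "couplings p q = {\<gamma>. map_pmf fst \<gamma> = p \<and> map_pmf snd \<gamma> = q}"

definition wasserstein1 :: "'a::metric_space pmf \<Rightarrow> 'a pmf \<Rightarrow> real" where
  "wasserstein1 p q = (INF \<gamma>\<in>couplings p q. measure_pmf.expectation \<gamma> (\<lambda>(x, y). dist x y))"

definition unif_subsets :: "nat \<Rightarrow> nat \<Rightarrow> nat set pmf" where
  "unif_subsets k n = pmf_of_set {S. S \<subseteq> {1..n} \<and> card S = k}"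

end

theory Submission
  imports Defs
begin

text \<open>Let \<open>g S\<close> be the Wasserstein distance between the empirical distributions of \<open>f\<close> on
  \<open>[n]\<close> and on \<open>S\<close>. Exchanging one element of \<open>S\<close> changes \<open>g S\<close> by at most \<open>1/k\<close>: by the
  triangle inequality for \<open>W\<close> (proved by gluing couplings) it suffices to bound the distance
  between the empirical distributions on \<open>S\<close> and on the exchanged set, and the coupling that
  moves only the mass \<open>1/k\<close> of the exchanged point does this.

  Functions of a uniform \<open>k\<close>-subset with bounded differences \<open>c\<close> satisfy a McDiarmid bound.
  A uniform \<open>(j+1)\<close>-subset is a uniform point \<open>x\<close> together with a uniform \<open>j\<close>-subset of the
  remaining points; the conditional means given \<open>x\<close> vary by at most \<open>c\<close> (exchange \<open>x\<close> for
  another point), so Hoeffding's lemma and induction on \<open>j\<close> bound the moment generating function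
  by \<open>exp (\<lambda>\<^sup>2 c\<^sup>2 k / 8)\<close>. The Chernoff bound then gives \<open>exp (-2 t\<^sup>2 k)\<close>, which is
  stronger than the claimed \<open>exp (-t\<^sup>2 k / 4)\<close>.\<close>

section \<open>Uniform \<open>k\<close>-subsets and bounded differences\<close>

definition average :: "'b set \<Rightarrow> ('b \<Rightarrow> real) \<Rightarrow> real" where
  "average A F = (\<Sum>x\<in>A. F x) / real (card A)"

definition ksubsets :: "'b set \<Rightarrow> nat \<Rightarrow> 'b set set" where
  "ksubsets U k = {S. S \<subseteq> U \<and> card S = k}"

lemma average_mono: "(\<And>x. x \<in> A \<Longrightarrow> F x \<le> G x) \<Longrightarrow> average A F \<le> average A G"
  unfolding average_def by (intro divide_right_mono sum_mono) auto

lemma average_cmult: "average A (\<lambda>x. c * F x) = c * average A F"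
  unfolding average_def by (simp add: sum_distrib_left)

lemma average_cong: "(\<And>x. x \<in> A \<Longrightarrow> F x = G x) \<Longrightarrow> average A F = average A G"
  unfolding average_def by simp

lemma expectation_pmf_of_set_eq_average:
  "finite A \<Longrightarrow> A \<noteq> {} \<Longrightarrow> measure_pmf.expectation (pmf_of_set A) F = average A F"
  by (simp add: integral_pmf_of_set average_def)

lemma finite_ksubsets: "finite U \<Longrightarrow> finite (ksubsets U k)"
  unfolding ksubsets_def by (auto intro: finite_subset[of _ "Pow U"])

lemma card_ksubsets: "finite U \<Longrightarrow> card (ksubsets U k) = card U choose k"
  unfolding ksubsets_def by (rule n_subsets)

lemma ksubsets_nonempty: "finite U \<Longrightarrow> k \<le> card U \<Longrightarrow> ksubsets U k \<noteq> {}"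
  using card_ksubsets[of U k] zero_less_binomial[of k "card U"] by fastforce

lemma ksubsets_0: "finite U \<Longrightarrow> ksubsets U 0 = {{}}"
  unfolding ksubsets_def by (auto dest: finite_subset)

lemma insert_in_ksubsets:
  assumes "finite U" "x \<in> U" "S \<in> ksubsets (U - {x}) k"
  shows "insert x S \<in> ksubsets U (Suc k)"
proof -
  have "finite S" "x \<notin> S" using assms by (auto simp: ksubsets_def intro: finite_subset)
  then show ?thesis using assms by (auto simp: ksubsets_def)
qed

lemma average_exp_le_Hoeffding:
  assumes "finite A" "A \<noteq> {}" "\<And>x y. x \<in> A \<Longrightarrow> y \<in> A \<Longrightarrow> h x - h y \<le> c" "l > 0"
  shows "average A (\<lambda>x. exp (l * (h x - average A h))) \<le> exp (l\<^sup>2 * c\<^sup>2 / 8)"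
proof -
  define a where "a = Min (h ` A)"
  have "a \<in> h ` A"
    unfolding a_def using assms by (intro Min_in) auto
  then obtain y where "y \<in> A" "a = h y" by blast
  have range: "h x \<in> {a..a + c}" if "x \<in> A" for x
  proof -
    have "a \<le> h x" unfolding a_def using assms(1) that by (intro Min_le) auto
    then show ?thesis using \<open>a = h y\<close> assms(3)[OF that \<open>y \<in> A\<close>] by simp
  qed
  interpret interval_bounded_random_variable "measure_pmf (pmf_of_set A)" h a "a + c"
    by unfold_locales (use assms range in \<open>auto simp: AE_measure_pmf_iff\<close>)
  have mean: "measure_pmf.expectation (pmf_of_set A) h = average A h"
    using assms by (simp add: integral_pmf_of_set average_def)
  have "nn_integral (measure_pmf (pmf_of_set A)) (\<lambda>x. exp (l * (h x - average A h)))
      \<le> ennreal (exp (l\<^sup>2 * (a + c - a)\<^sup>2 / 8))"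
    using Hoeffdings_lemma_nn_integral[OF \<open>l > 0\<close>] unfolding mean .
  moreover have "nn_integral (measure_pmf (pmf_of_set A)) (\<lambda>x. exp (l * (h x - average A h)))
      = ennreal (average A (\<lambda>x. exp (l * (h x - average A h))))"
    using assms by (simp add: nn_integral_pmf_of_set average_def
        ennreal_of_nat_eq_real_of_nat divide_ennreal sum_nonneg card_gt_0_iff)
  ultimately show ?thesis by simp
qed

lemma sum_ksubsets_insert:
  assumes "finite U"
  shows "(\<Sum>x\<in>U. \<Sum>S\<in>ksubsets (U - {x}) j. F (insert x S))
       = real (Suc j) * (\<Sum>S\<in>ksubsets U (Suc j). F S)"
proof -
  have fibre: "(\<Sum>S\<in>ksubsets (U - {x}) j. F (insert x S)) = (\<Sum>T\<in>{T \<in> ksubsets U (Suc j). x \<in> T}. F T)"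
    if "x \<in> U" for x
  proof (rule sum.reindex_bij_witness[of _ "\<lambda>T. T - {x}" "insert x"])
    fix T assume "T \<in> {T \<in> ksubsets U (Suc j). x \<in> T}"
    then show "T - {x} \<in> ksubsets (U - {x}) j" "insert x (T - {x}) = T"
      using assms by (auto simp: ksubsets_def card_Diff_singleton_if intro: finite_subset)
  next
    fix S assume S: "S \<in> ksubsets (U - {x}) j"
    then show "insert x S - {x} = S" by (auto simp: ksubsets_def)
    show "insert x S \<in> {T \<in> ksubsets U (Suc j). x \<in> T}"
      using insert_in_ksubsets[OF assms that S] by simp
  qed simp
  have "(\<Sum>x\<in>U. \<Sum>S\<in>ksubsets (U - {x}) j. F (insert x S))
      = (\<Sum>x\<in>U. \<Sum>T\<in>{T \<in> ksubsets U (Suc j). x \<in> T}. F T)"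
    using fibre by simp
  also have "\<dots> = (\<Sum>T\<in>ksubsets U (Suc j). \<Sum>x\<in>{x \<in> U. x \<in> T}. F T)"
    by (rule sum.swap_restrict) (use assms finite_ksubsets in auto)
  also have "\<dots> = (\<Sum>T\<in>ksubsets U (Suc j). real (Suc j) * F T)"
  proof (rule sum.cong)
    fix T assume "T \<in> ksubsets U (Suc j)"
    then have "{x \<in> U. x \<in> T} = T" "card T = Suc j" by (auto simp: ksubsets_def)
    then show "(\<Sum>x\<in>{x \<in> U. x \<in> T}. F T) = real (Suc j) * F T" by simp
  qed simp
  finally show ?thesis by (simp add: sum_distrib_left)
qed

lemma average_ksubsets_Suc:
  assumes "finite U" "Suc j \<le> card U"
  shows "average (ksubsets U (Suc j)) F
       = average U (\<lambda>x. average (ksubsets (U - {x}) j) (\<lambda>S. F (insert x S)))"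
proof -
  define m where "m = card U"
  have card_fibre: "card (ksubsets (U - {x}) j) = (m - 1) choose j" if "x \<in> U" for x
    using assms that by (simp add: card_ksubsets m_def)
  have card_ksubsets_Suc: "real (card (ksubsets U (Suc j))) * real (Suc j) = real m * real ((m - 1) choose j)"
    using Suc_times_binomial_eq[of "m - 1" j] assms
    by (simp add: card_ksubsets m_def algebra_simps flip: of_nat_mult)
  have "average U (\<lambda>x. average (ksubsets (U - {x}) j) (\<lambda>S. F (insert x S)))
      = (\<Sum>x\<in>U. \<Sum>S\<in>ksubsets (U - {x}) j. F (insert x S)) / (real m * real ((m - 1) choose j))"
    unfolding average_def by (simp add: card_fibre sum_divide_distrib m_def ac_simps)
  also have "\<dots> = real (Suc j) * (\<Sum>T\<in>ksubsets U (Suc j). F T)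
                   / (real (card (ksubsets U (Suc j))) * real (Suc j))"
    unfolding sum_ksubsets_insert[OF assms(1)] card_ksubsets_Suc ..
  also have "\<dots> = average (ksubsets U (Suc j)) F"
    by (simp add: average_def)
  finally show ?thesis ..
qed

definition bounded_differences :: "real \<Rightarrow> ('b set \<Rightarrow> real) \<Rightarrow> 'b set \<Rightarrow> nat \<Rightarrow> bool" where
  "bounded_differences c g U k \<longleftrightarrow>
     (\<forall>S\<in>ksubsets U k. \<forall>x\<in>S. \<forall>y\<in>U - S. \<bar>g S - g (insert y (S - {x}))\<bar> \<le> c)"

lemma bounded_differences_insert:
  assumes "bounded_differences c g U (Suc j)" "finite U" "x \<in> U"
  shows "bounded_differences c (\<lambda>S. g (insert x S)) (U - {x}) j"
  unfolding bounded_differences_def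
proof (intro ballI)
  fix S y z assume S: "S \<in> ksubsets (U - {x}) j" and y: "y \<in> S" and z: "z \<in> U - {x} - S"
  have "insert x S \<in> ksubsets U (Suc j)" by (rule insert_in_ksubsets[OF assms(2,3) S])
  moreover have "y \<in> insert x S" "z \<in> U - insert x S" using y z by auto
  ultimately have "\<bar>g (insert x S) - g (insert z (insert x S - {y}))\<bar> \<le> c"
    using assms(1) unfolding bounded_differences_def by blast
  moreover have "insert z (insert x S - {y}) = insert x (insert z (S - {y}))"
    using S y by (auto simp: ksubsets_def)
  ultimately show "\<bar>g (insert x S) - g (insert x (insert z (S - {y})))\<bar> \<le> c" by simp
qed

definition exchange :: "'b \<Rightarrow> 'b \<Rightarrow> 'b set \<Rightarrow> 'b set" where
  "exchange x y S = (if y \<in> S then insert x (S - {y}) else S)"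

lemma exchange_in_ksubsets:
  assumes "finite U" "x \<in> U" "S \<in> ksubsets (U - {x}) j"
  shows "exchange x y S \<in> ksubsets (U - {y}) j"
proof -
  have "finite S" "x \<notin> S" using assms by (auto simp: ksubsets_def intro: finite_subset)
  moreover have "card S > 0" if "y \<in> S" using \<open>finite S\<close> that card_gt_0_iff by blast
  ultimately show ?thesis using assms by (auto simp: ksubsets_def exchange_def card_insert_if)
qed

lemma exchange_exchange: "S \<in> ksubsets (U - {x}) j \<Longrightarrow> exchange y x (exchange x y S) = S"
  by (auto simp: ksubsets_def exchange_def)

text \<open>Exchanging \<open>x\<close> and \<open>y\<close> is a bijection between the two conditional sample spaces
  that moves \<open>g\<close> by at most \<open>c\<close>.\<close>

lemma average_insert_diff_le:
  assumes U: "finite U" and x: "x \<in> U" and y: "y \<in> U" and j: "Suc j \<le> card U"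
    and bd: "bounded_differences c g U (Suc j)" and c: "c \<ge> 0"
  shows "average (ksubsets (U - {x}) j) (\<lambda>S. g (insert x S))
       - average (ksubsets (U - {y}) j) (\<lambda>S. g (insert y S)) \<le> c"
proof -
  let ?X = "ksubsets (U - {x}) j"
  have "(\<Sum>S\<in>ksubsets (U - {y}) j. g (insert y S)) = (\<Sum>S\<in>?X. g (insert y (exchange x y S)))"
  proof (rule sum.reindex_bij_witness[of _ "exchange x y" "exchange y x"])
    fix S assume S: "S \<in> ksubsets (U - {y}) j"
    show "exchange x y (exchange y x S) = S" using exchange_exchange[OF S] .
    show "exchange y x S \<in> ?X" using exchange_in_ksubsets[OF U y S] .
    show "g (insert y (exchange x y (exchange y x S))) = g (insert y S)"
      using exchange_exchange[OF S] by simp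
  next
    fix S assume S: "S \<in> ?X"
    show "exchange y x (exchange x y S) = S" using exchange_exchange[OF S] .
    show "exchange x y S \<in> ksubsets (U - {y}) j" using exchange_in_ksubsets[OF U x S] .
  qed
  moreover have "g (insert x S) - g (insert y (exchange x y S)) \<le> c" if S: "S \<in> ?X" for S
  proof (cases "y \<in> S \<or> x = y")
    case True
    then have "insert y (exchange x y S) = insert x S" by (auto simp: exchange_def)
    then show ?thesis using c by simp
  next
    case False
    have "insert x S \<in> ksubsets U (Suc j)" by (rule insert_in_ksubsets[OF U x S])
    moreover have "y \<in> U - insert x S" using False y S by (auto simp: ksubsets_def)
    ultimately have "\<bar>g (insert x S) - g (insert y (insert x S - {x}))\<bar> \<le> c"
      using bd unfolding bounded_differences_def by blast
    moreover have "insert x S - {x} = exchange x y S"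
      using False S by (auto simp: exchange_def ksubsets_def)
    ultimately show ?thesis by simp
  qed
  then have "(\<Sum>S\<in>?X. g (insert x S) - g (insert y (exchange x y S))) \<le> (\<Sum>S\<in>?X. c)"
    by (intro sum_mono)
  moreover have "card ?X = card (ksubsets (U - {y}) j)" "card ?X > 0"
    using U x y j finite_ksubsets ksubsets_nonempty by (simp_all add: card_ksubsets card_gt_0_iff)
  ultimately show ?thesis
    by (simp add: average_def sum_subtractf diff_divide_distrib[symmetric] pos_divide_le_eq mult.commute)
qed

lemma average_exp_ksubsets_le:
  assumes "finite U" "k \<le> card U" "bounded_differences c g U k" "c \<ge> 0" "l > 0"
  shows "average (ksubsets U k) (\<lambda>S. exp (l * (g S - average (ksubsets U k) g)))
       \<le> exp (l\<^sup>2 * c\<^sup>2 * real k / 8)"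
  using assms(1-3)
proof (induction k arbitrary: U g)
  case 0
  then show ?case by (simp add: ksubsets_0 average_def)
next
  case (Suc j)
  note U = Suc.prems(1) and j = Suc.prems(2) and bd = Suc.prems(3)
  define h where "h x = average (ksubsets (U - {x}) j) (\<lambda>S. g (insert x S))" for x
  define \<mu> where "\<mu> = average (ksubsets U (Suc j)) g"
  define E where "E = exp (l\<^sup>2 * c\<^sup>2 * real j / 8)"
  have \<mu>: "\<mu> = average U h"
    unfolding \<mu>_def h_def by (rule average_ksubsets_Suc[OF U j])
  have IH: "average (ksubsets (U - {x}) j) (\<lambda>S. exp (l * (g (insert x S) - h x))) \<le> E"
    if "x \<in> U" for x
    unfolding h_def E_def
    by (rule Suc.IH) (use U j that bounded_differences_insert[OF bd U that] in auto)
  have h_diff: "h x - h y \<le> c" if "x \<in> U" "y \<in> U" for x y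
    unfolding h_def by (rule average_insert_diff_le[OF U that j bd assms(4)])
  have "U \<noteq> {}" using j by auto
  have "average (ksubsets U (Suc j)) (\<lambda>S. exp (l * (g S - \<mu>)))
      = average U (\<lambda>x. exp (l * (h x - \<mu>))
          * average (ksubsets (U - {x}) j) (\<lambda>S. exp (l * (g (insert x S) - h x))))"
    unfolding average_ksubsets_Suc[OF U j]
    by (intro average_cong) (simp add: exp_add[symmetric] algebra_simps flip: average_cmult)
  also have "\<dots> \<le> average U (\<lambda>x. exp (l * (h x - \<mu>)) * E)"
    by (intro average_mono mult_left_mono IH) simp_all
  also have "\<dots> = E * average U (\<lambda>x. exp (l * (h x - average U h)))"
    by (simp add: average_cmult[symmetric] \<mu> mult.commute)
  also have "\<dots> \<le> E * exp (l\<^sup>2 * c\<^sup>2 / 8)"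
    using average_exp_le_Hoeffding[OF U \<open>U \<noteq> {}\<close> h_diff assms(5)] by (simp add: E_def)
  also have "\<dots> = exp (l\<^sup>2 * c\<^sup>2 * real (Suc j) / 8)"
    by (simp add: E_def exp_add[symmetric] algebra_simps add_divide_distrib)
  finally show ?case unfolding \<mu>_def .
qed

lemma prob_ge_average_le_Chernoff:
  assumes "finite A" "A \<noteq> {}" "l > 0"
  shows "measure_pmf.prob (pmf_of_set A) {x. g x \<ge> average A g + t}
       \<le> exp (- l * t) * average A (\<lambda>x. exp (l * (g x - average A g)))"
proof -
  let ?B = "{x. g x \<ge> average A g + t}"
  have "real (card (A \<inter> ?B)) = (\<Sum>x\<in>A \<inter> ?B. 1)" by simp
  also have "\<dots> \<le> (\<Sum>x\<in>A \<inter> ?B. exp (l * (g x - average A g - t)))"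
    using assms(3) by (intro sum_mono) simp
  also have "\<dots> \<le> (\<Sum>x\<in>A. exp (l * (g x - average A g - t)))"
    using assms(1) by (intro sum_mono2) auto
  also have "\<dots> = exp (- l * t) * (\<Sum>x\<in>A. exp (l * (g x - average A g)))"
    by (simp add: sum_distrib_left exp_add[symmetric] algebra_simps)
  finally show ?thesis
    using assms(1,2) by (simp add: measure_pmf_of_set average_def divide_right_mono)
qed

theorem ksubsets_McDiarmid:
  assumes "finite U" "0 < k" "k \<le> card U" "bounded_differences c g U k" "c > 0" "t > 0"
  defines "P \<equiv> pmf_of_set (ksubsets U k)"
  shows "measure_pmf.prob P {S. g S \<ge> measure_pmf.expectation P g + t}
       \<le> exp (- 2 * t\<^sup>2 / (real k * c\<^sup>2))"
proof -
  define l where "l = 4 * t / (real k * c\<^sup>2)"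
  have l: "l > 0" using assms by (simp add: l_def)
  have K: "finite (ksubsets U k)" "ksubsets U k \<noteq> {}"
    using assms by (simp_all add: finite_ksubsets ksubsets_nonempty)
  have "measure_pmf.prob P {S. g S \<ge> measure_pmf.expectation P g + t}
      \<le> exp (- l * t) * average (ksubsets U k) (\<lambda>S. exp (l * (g S - average (ksubsets U k) g)))"
    unfolding P_def expectation_pmf_of_set_eq_average[OF K]
    by (rule prob_ge_average_le_Chernoff[OF K l])
  also have "\<dots> \<le> exp (- l * t) * exp (l\<^sup>2 * c\<^sup>2 * real k / 8)"
    using average_exp_ksubsets_le[OF assms(1,3,4) _ l] assms(5) by simp
  also have "\<dots> = exp (- 2 * t\<^sup>2 / (real k * c\<^sup>2))"
    using assms by (simp add: l_def exp_add[symmetric] power2_eq_square field_simps)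
  finally show ?thesis .
qed

section \<open>Wasserstein distance of empirical distributions\<close>

definition transport_cost :: "('a::metric_space \<times> 'a) pmf \<Rightarrow> real" where
  "transport_cost \<gamma> = measure_pmf.expectation \<gamma> (\<lambda>(x, y). dist x y)"

lemma transport_cost_nonneg: "transport_cost \<gamma> \<ge> 0"
  unfolding transport_cost_def by (rule integral_nonneg_AE) auto

lemma set_pmf_couplings: "\<gamma> \<in> couplings p q \<Longrightarrow> set_pmf \<gamma> \<subseteq> set_pmf p \<times> set_pmf q"
  unfolding couplings_def by force

lemma pair_pmf_in_couplings: "pair_pmf p q \<in> couplings p q"
  unfolding couplings_def by (simp add: map_fst_pair_pmf map_snd_pair_pmf)

lemma wasserstein1_le_transport_cost: "\<gamma> \<in> couplings p q \<Longrightarrow> wasserstein1 p q \<le> transport_cost \<gamma>"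
  unfolding wasserstein1_def transport_cost_def[symmetric]
  by (rule cINF_lower) (auto intro: bdd_belowI[where m = 0] transport_cost_nonneg)

lemma wasserstein1_greatest:
  "(\<And>\<gamma>. \<gamma> \<in> couplings p q \<Longrightarrow> z \<le> transport_cost \<gamma>) \<Longrightarrow> z \<le> wasserstein1 p q"
  unfolding wasserstein1_def transport_cost_def[symmetric]
  by (rule cINF_greatest) (use pair_pmf_in_couplings in auto)

lemma pmf_gluing:
  assumes eq: "map_pmf snd pq = map_pmf fst qr"
  obtains \<eta> where "map_pmf (\<lambda>(x, y, z). (x, y)) \<eta> = pq" "map_pmf (\<lambda>(x, y, z). (y, z)) \<eta> = qr"
proof
  let ?C = "\<lambda>xy. cond_pmf qr {yz. fst yz = snd xy}"
  define \<eta> where "\<eta> = bind_pmf pq (\<lambda>xy. map_pmf (\<lambda>yz. (fst xy, snd xy, snd yz)) (?C xy))"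
  have nonempty: "set_pmf qr \<inter> {yz. fst yz = snd xy} \<noteq> {}" if "xy \<in> set_pmf pq" for xy
  proof -
    have "snd xy \<in> set_pmf (map_pmf fst qr)" using that by (simp flip: eq)
    then show ?thesis by auto
  qed
  have "map_pmf (\<lambda>(x, y, z). (x, y)) \<eta> = bind_pmf pq (\<lambda>xy. map_pmf (\<lambda>_. xy) (?C xy))"
    unfolding \<eta>_def map_bind_pmf map_pmf_comp by (simp add: case_prod_beta)
  also have "\<dots> = pq"
    by (simp add: bind_return_pmf')
  finally show "map_pmf (\<lambda>(x, y, z). (x, y)) \<eta> = pq" .
  have "map_pmf (\<lambda>(x, y, z). (y, z)) \<eta> = bind_pmf pq (\<lambda>xy. map_pmf (\<lambda>yz. (snd xy, snd yz)) (?C xy))"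
    unfolding \<eta>_def map_bind_pmf map_pmf_comp by (simp add: case_prod_beta)
  also have "\<dots> = bind_pmf pq ?C"
  proof (rule bind_pmf_cong[OF refl])
    fix xy assume "xy \<in> set_pmf pq"
    then show "map_pmf (\<lambda>yz. (snd xy, snd yz)) (?C xy) = ?C xy"
      by (intro map_pmf_idI) (auto simp: set_cond_pmf[OF nonempty])
  qed
  also have "\<dots> = bind_pmf (map_pmf fst qr) (\<lambda>y. cond_pmf qr {yz. fst yz = y})"
    by (simp add: bind_map_pmf flip: eq)
  also have "\<dots> = qr"
    by (subst bind_map_pmf, rule bind_cond_pmf_cancel) (auto simp: eq_commute)
  finally show "map_pmf (\<lambda>(x, y, z). (y, z)) \<eta> = qr" .
qed

lemma wasserstein1_le_transport_cost_add:
  fixes p q r :: "'a::metric_space pmf"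
  assumes fin: "finite (set_pmf p)" "finite (set_pmf r)" "finite (set_pmf q)"
    and \<gamma>\<^sub>1: "\<gamma>\<^sub>1 \<in> couplings p r" and \<gamma>\<^sub>2: "\<gamma>\<^sub>2 \<in> couplings r q"
  shows "wasserstein1 p q \<le> transport_cost \<gamma>\<^sub>1 + transport_cost \<gamma>\<^sub>2"
proof -
  have "map_pmf snd \<gamma>\<^sub>1 = map_pmf fst \<gamma>\<^sub>2" using \<gamma>\<^sub>1 \<gamma>\<^sub>2 by (simp add: couplings_def)
  then obtain \<eta> where \<eta>\<^sub>1: "map_pmf (\<lambda>(x, y, z). (x, y)) \<eta> = \<gamma>\<^sub>1"
    and \<eta>\<^sub>2: "map_pmf (\<lambda>(x, y, z). (y, z)) \<eta> = \<gamma>\<^sub>2"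
    by (rule pmf_gluing)
  have "set_pmf \<eta> \<subseteq> set_pmf p \<times> set_pmf r \<times> set_pmf q"
    using set_pmf_couplings[OF \<gamma>\<^sub>1] set_pmf_couplings[OF \<gamma>\<^sub>2]
    unfolding \<eta>\<^sub>1[symmetric] \<eta>\<^sub>2[symmetric] by force
  then have "finite (set_pmf \<eta>)"
    by (rule finite_subset) (use fin in auto)
  then have integrable: "integrable (measure_pmf \<eta>) F" for F :: "_ \<Rightarrow> real"
    by (rule integrable_measure_pmf_finite)
  define \<gamma> where "\<gamma> = map_pmf (\<lambda>(x, y, z). (x, z)) \<eta>"
  have "map_pmf fst \<gamma> = map_pmf fst \<gamma>\<^sub>1" "map_pmf snd \<gamma> = map_pmf snd \<gamma>\<^sub>2"
    unfolding \<gamma>_def \<eta>\<^sub>1[symmetric] \<eta>\<^sub>2[symmetric] map_pmf_comp by (simp_all add: case_prod_beta)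
  then have "\<gamma> \<in> couplings p q"
    using \<gamma>\<^sub>1 \<gamma>\<^sub>2 by (simp add: couplings_def)
  then have "wasserstein1 p q \<le> transport_cost \<gamma>"
    by (rule wasserstein1_le_transport_cost)
  also have "\<dots> = measure_pmf.expectation \<eta> (\<lambda>(x, y, z). dist x z)"
    unfolding transport_cost_def \<gamma>_def by (simp add: case_prod_unfold)
  also have "\<dots> \<le> measure_pmf.expectation \<eta> (\<lambda>(x, y, z). dist x y + dist y z)"
    by (intro integral_mono integrable) (auto simp: dist_triangle)
  also have "\<dots> = transport_cost \<gamma>\<^sub>1 + transport_cost \<gamma>\<^sub>2"
    unfolding transport_cost_def \<eta>\<^sub>1[symmetric] \<eta>\<^sub>2[symmetric]
    by (simp add: case_prod_unfold integrable)
  finally show ?thesis .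
qed

lemma wasserstein1_triangle:
  fixes p q r :: "'a::metric_space pmf"
  assumes "finite (set_pmf p)" "finite (set_pmf r)" "finite (set_pmf q)"
  shows "wasserstein1 p q \<le> wasserstein1 p r + wasserstein1 r q"
proof -
  have "wasserstein1 p q - transport_cost \<gamma>\<^sub>2 \<le> wasserstein1 p r" if "\<gamma>\<^sub>2 \<in> couplings r q" for \<gamma>\<^sub>2
    using wasserstein1_le_transport_cost_add[OF assms _ that]
    by (intro wasserstein1_greatest) (simp add: algebra_simps)
  then have "wasserstein1 p q - wasserstein1 p r \<le> wasserstein1 r q"
    by (intro wasserstein1_greatest) (simp add: algebra_simps)
  then show ?thesis by simp
qed

lemma finite_set_pmf_empirical: "finite S \<Longrightarrow> S \<noteq> {} \<Longrightarrow> finite (set_pmf (empirical f S))"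
  by (simp add: empirical_def)

lemma wasserstein1_empirical_exchange_le:
  assumes T: "finite T" "a \<in> T" "b \<notin> T"
  shows "wasserstein1 (empirical f T) (empirical f (insert b (T - {a})))
       \<le> dist (f a) (f b) / real (card T)"
proof -
  define \<sigma> where "\<sigma> i = (if i = a then b else i)" for i
  define \<gamma> where "\<gamma> = map_pmf (\<lambda>i. (f i, f (\<sigma> i))) (pmf_of_set T)"
  have "T \<noteq> {}" using T by auto
  have "map_pmf \<sigma> (pmf_of_set T) = pmf_of_set (insert b (T - {a}))"
  proof -
    have "inj_on \<sigma> T" "\<sigma> ` T = insert b (T - {a})" using T by (auto simp: \<sigma>_def inj_on_def)
    then show ?thesis using map_pmf_of_set_inj \<open>T \<noteq> {}\<close> T(1) by metis
  qed
  moreover have "map_pmf snd \<gamma> = map_pmf f (map_pmf \<sigma> (pmf_of_set T))"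
    unfolding \<gamma>_def map_pmf_comp by simp
  ultimately have "\<gamma> \<in> couplings (empirical f T) (empirical f (insert b (T - {a})))"
    unfolding couplings_def empirical_def by (simp add: \<gamma>_def map_pmf_comp)
  then have "wasserstein1 (empirical f T) (empirical f (insert b (T - {a}))) \<le> transport_cost \<gamma>"
    by (rule wasserstein1_le_transport_cost)
  also have "transport_cost \<gamma> = (\<Sum>i\<in>T. dist (f i) (f (\<sigma> i))) / real (card T)"
    unfolding transport_cost_def \<gamma>_def using T \<open>T \<noteq> {}\<close> by (simp add: integral_pmf_of_set)
  also have "(\<Sum>i\<in>T. dist (f i) (f (\<sigma> i))) = dist (f a) (f b)"
    using T by (simp add: sum.remove \<sigma>_def)
  finally show ?thesis .
qed

lemma wasserstein1_empirical_bounded_differences: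
  assumes "finite (set_pmf p)" "finite U" "\<And>i j. i \<in> U \<Longrightarrow> j \<in> U \<Longrightarrow> dist (f i) (f j) \<le> B"
  shows "bounded_differences (B / real k) (\<lambda>S. wasserstein1 p (empirical f S)) U k"
  unfolding bounded_differences_def
proof (intro ballI)
  fix S x y assume S: "S \<in> ksubsets U k" and x: "x \<in> S" and y: "y \<in> U - S"
  define S' where "S' = insert y (S - {x})"
  have "finite S" "card S = k" using S assms(2) by (auto simp: ksubsets_def intro: finite_subset)
  have "S \<in> ksubsets (U - {y}) k" using S y by (auto simp: ksubsets_def)
  then have "S' \<in> ksubsets (U - {x}) k"
    using exchange_in_ksubsets[of U y S k x] assms(2) x y by (simp add: S'_def exchange_def)
  then have S': "finite S'" "card S' = k" "x \<notin> S'" "y \<in> S'" "S = insert x (S' - {y})"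
    using \<open>finite S\<close> x y by (auto simp: ksubsets_def S'_def)
  have B: "dist (f x) (f y) / real k \<le> B / real k" "dist (f y) (f x) / real k \<le> B / real k"
    using assms(3) x y S by (auto simp: ksubsets_def intro!: divide_right_mono)
  have "wasserstein1 (empirical f S) (empirical f S') \<le> B / real k"
    using wasserstein1_empirical_exchange_le[OF \<open>finite S\<close> x, of y f] y B(1)
    by (simp add: S'_def \<open>card S = k\<close>)
  moreover have "wasserstein1 (empirical f S') (empirical f S) \<le> B / real k"
    using wasserstein1_empirical_exchange_le[OF S'(1,4,3), of f] B(2) S'(2,5) by simp
  moreover have fin: "finite (set_pmf (empirical f S))" "finite (set_pmf (empirical f S'))"
    using \<open>finite S\<close> S' x by (auto intro!: finite_set_pmf_empirical)
  ultimately show "\<bar>wasserstein1 p (empirical f S) - wasserstein1 p (empirical f (insert y (S - {x})))\<bar>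
      \<le> B / real k"
    using wasserstein1_triangle[OF assms(1) fin] wasserstein1_triangle[OF assms(1) fin(2,1)]
    unfolding S'_def by linarith
qed

theorem lemma2p4:
  fixes f :: "nat \<Rightarrow> 'a::metric_space" and k n :: nat and t :: real
  assumes "\<forall>x y :: 'a. dist x y \<le> 1"
    and "1 \<le> k" and "k \<le> n" and "t > 0"
  shows "measure_pmf.prob (unif_subsets k n)
           {S. wasserstein1 (empirical f {1..n}) (empirical f S) \<ge>
               measure_pmf.expectation (unif_subsets k n)
                 (\<lambda>S. wasserstein1 (empirical f {1..n}) (empirical f S)) + t}
         \<le> exp (- t\<^sup>2 * real k / 4)"
proof -
  define g where "g S = wasserstein1 (empirical f {1..n}) (empirical f S)" for S
  have uniform: "unif_subsets k n = pmf_of_set (ksubsets {1..n} k)"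
    unfolding unif_subsets_def ksubsets_def ..
  have "bounded_differences (1 / real k) g {1..n} k"
    unfolding g_def using assms(1-3)
    by (intro wasserstein1_empirical_bounded_differences finite_set_pmf_empirical) auto
  then have "measure_pmf.prob (unif_subsets k n)
               {S. g S \<ge> measure_pmf.expectation (unif_subsets k n) g + t}
      \<le> exp (- 2 * t\<^sup>2 / (real k * (1 / real k)\<^sup>2))"
    unfolding uniform using assms(2-4) by (intro ksubsets_McDiarmid) auto
  also have "\<dots> = exp (- 2 * t\<^sup>2 * real k)"
    using assms(2) by (simp add: power2_eq_square field_simps)
  also have "\<dots> \<le> exp (- t\<^sup>2 * real k / 4)"
    by simp
  finally show ?thesis
    unfolding g_def .
qed

end
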